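(* For each natural number $m\ge1$, the sequence $H(n)\bmod m$ is uniformly distributed in $\{0,1,\dots,m-1\}$: for every $j\in\{0,\dots,m-1\}$, $\frac1N\#\{1\le n\le N: H(n)\equiv j \pmod m\}\to\frac1m$ as $N\to\infty$.
   Context: $H$ is Hofstadter's $H$ sequence: $H(1)=1$ and $H(n)=n-H(H(H(n-1)))$ for $n>1$. *)

theory Defs
  imports "HOL-Analysis.Analysis"
begin

text \<open>Hofstadter's H sequence: H(1)=1, H(n) = n - H(H(H(n-1))) for n>1.
  The value at 0 is fixed to 0 (irrelevant convention) so that the
  function is uniquely determined.\<close>
definition hofH :: "nat \<Rightarrow> nat" where
  "hofH = (THE h. h 0 = 0 \<and> h 1 = 1 \<and> (\<forall>n>1. h n = n - h (h (h (n - 1)))))"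

end

theory Submission
  imports Defs
begin

(* H is nondecreasing with steps 0 and 1, and it is self-similar on the blocks cut out by
   Narayana's sequence a (a (k+3) = a (k+2) + a k): H (a (k+3) + t) = a (k+2) + H t for
   0 < t <= a (k+1).  Hence the exponential sums S z N = sum of z ^ H n over 1 <= n <= N obey
   S z (a (k+4)) = S z (a (k+3)) + z ^ a (k+2) * S z (a (k+1)).  If z <> 1 is a root of unity,
   then z ^ a k <> 1 for one k in every three consecutive indices, and there the factor
   1 + z ^ a k has modulus at most 2 - c; this uniform loss forces S z (a k) = o (a k), the
   block decomposition extends it to S z N = o N, and orthogonality of the m-th roots of
   unity turns these estimates into equidistribution modulo m. *)

(* Clamping the arguments below n makes the nested recursion terminate; since the
   values satisfy h n \<le> n, the clamps never act. *)
fun hofH_clamped :: "nat \<Rightarrow> nat" where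
  "hofH_clamped 0 = 0"
| "hofH_clamped (Suc 0) = 1"
| "hofH_clamped (Suc (Suc n)) =
     Suc (Suc n) - hofH_clamped (min (Suc n) (hofH_clamped (min (Suc n) (hofH_clamped (Suc n)))))"

lemma hofH_clamped_le: "hofH_clamped n \<le> n"
  by (induction n rule: hofH_clamped.induct) auto

lemma hofH_clamped_rec:
  "hofH_clamped (Suc (Suc n)) =
     Suc (Suc n) - hofH_clamped (hofH_clamped (hofH_clamped (Suc n)))"
proof -
  have "hofH_clamped (hofH_clamped (Suc n)) \<le> Suc n"
    using hofH_clamped_le le_trans by blast
  then show ?thesis
    using hofH_clamped_le[of "Suc n"] by (simp add: min_absorb2)
qed

definition hofH_equations :: "(nat \<Rightarrow> nat) \<Rightarrow> bool" where
  "hofH_equations h \<longleftrightarrow> h 0 = 0 \<and> h 1 = 1 \<and> (\<forall>n>1. h n = n - h (h (h (n - 1))))"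

lemma hofH_equationsD:
  assumes "hofH_equations h"
  shows "h 0 = 0" "h 1 = 1" "1 < n \<Longrightarrow> h n = n - h (h (h (n - 1)))"
  using assms unfolding hofH_equations_def by auto

lemma hofH_equations_le:
  assumes "hofH_equations h"
  shows "h n \<le> n"
proof (cases "1 < n")
  case True
  then show ?thesis
    using hofH_equationsD(3)[OF assms True] by linarith
next
  case False
  then have "n = 0 \<or> n = 1" by auto
  then show ?thesis
    using hofH_equationsD(1,2)[OF assms] by auto
qed

lemma hofH_equations_clamped: "hofH_equations hofH_clamped"
  unfolding hofH_equations_def
proof (intro conjI allI impI)
  fix n :: nat
  assume "1 < n"
  then have n: "n = Suc (Suc (n - 2))"
    by simp
  show "hofH_clamped n = n - hofH_clamped (hofH_clamped (hofH_clamped (n - 1)))"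
    by (subst (1 2 3) n) (simp only: hofH_clamped_rec diff_Suc_1)
qed simp_all

lemma hofH_equations_unique:
  assumes h: "hofH_equations h" and g: "hofH_equations g"
  shows "h = g"
proof
  fix n
  show "h n = g n"
  proof (induction n rule: less_induct)
    case (less n)
    show ?case
    proof (cases "1 < n")
      case True
      have "n - 1 < n" "h (n - 1) < n" "h (h (n - 1)) < n"
        using hofH_equations_le[OF h, of "n - 1"] hofH_equations_le[OF h, of "h (n - 1)"] True
        by linarith+
      then have "h (n - 1) = g (n - 1)" "h (h (n - 1)) = g (h (n - 1))"
          "h (h (h (n - 1))) = g (h (h (n - 1)))"
        using less.IH by blast+
      then have "h (h (h (n - 1))) = g (g (g (n - 1)))"
        by simp
      then show ?thesis
        using hofH_equationsD(3)[OF h True] hofH_equationsD(3)[OF g True] by simp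
    next
      case False
      then have "n = 0 \<or> n = 1" by auto
      then show ?thesis
        using hofH_equationsD(1,2)[OF h] hofH_equationsD(1,2)[OF g] by auto
    qed
  qed
qed

lemma hofH_equations_hofH: "hofH_equations hofH"
proof -
  have "hofH = (THE h. hofH_equations h)"
    unfolding hofH_def hofH_equations_def ..
  moreover have "hofH_equations (THE h. hofH_equations h)"
    by (rule theI[of hofH_equations hofH_clamped, OF hofH_equations_clamped
          hofH_equations_unique[OF _ hofH_equations_clamped]])
  ultimately show ?thesis
    by simp
qed

lemmas hofH_0 [simp] = hofH_equationsD(1)[OF hofH_equations_hofH]
lemmas hofH_rec = hofH_equationsD(3)[OF hofH_equations_hofH]
lemmas hofH_le = hofH_equations_le[OF hofH_equations_hofH]

lemma hofH_1 [simp]: "hofH (Suc 0) = 1"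
  using hofH_equationsD(2)[OF hofH_equations_hofH] by simp

lemma hofH_Suc_rec: "0 < n \<Longrightarrow> hofH (Suc n) = Suc n - hofH (hofH (hofH n))"
  using hofH_rec[of "Suc n"] by simp

lemma hofH_2: "hofH 2 = 1"
  using hofH_Suc_rec[of 1] by (simp add: numeral_2_eq_2)

lemma hofH_Suc: "hofH (Suc n) = hofH n \<or> hofH (Suc n) = Suc (hofH n)"
proof (induction n rule: less_induct)
  case (less n)
  show ?case
  proof (cases "1 < n")
    case False
    then have "n = 0 \<or> n = 1" by auto
    then show ?thesis
      using hofH_2 by (auto simp: numeral_2_eq_2)
  next
    case True
    define x where "x = n - 1"
    have n: "n = Suc x" and "x < n"
      using True by (simp_all add: x_def)
    have step: "hofH v = hofH u \<or> hofH v = Suc (hofH u)" if "u < n" "v = u \<or> v = Suc u" for u v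
      using that(2)
    proof
      assume "v = Suc u"
      then show ?thesis
        using less.IH[OF that(1)] by simp
    qed simp
    have lt: "hofH x < n" "hofH (hofH x) < n"
      using hofH_le[of x] hofH_le[of "hofH x"] \<open>x < n\<close> by linarith+
    have "hofH n = hofH x \<or> hofH n = Suc (hofH x)"
      by (rule step[OF \<open>x < n\<close>]) (simp add: n)
    then have "hofH (hofH n) = hofH (hofH x) \<or> hofH (hofH n) = Suc (hofH (hofH x))"
      by (rule step[OF lt(1)])
    then have "hofH (hofH (hofH n)) = hofH (hofH (hofH x)) \<or>
               hofH (hofH (hofH n)) = Suc (hofH (hofH (hofH x)))"
      by (rule step[OF lt(2)])
    moreover have "hofH (hofH (hofH x)) \<le> x"
      using hofH_le[of x] hofH_le[of "hofH x"] hofH_le[of "hofH (hofH x)"] by linarith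
    moreover have "hofH n = n - hofH (hofH (hofH x))"
      using hofH_Suc_rec[of x] True unfolding n by simp
    moreover have "hofH (Suc n) = Suc n - hofH (hofH (hofH n))"
      using hofH_Suc_rec[of n] True by simp
    ultimately show ?thesis
      using \<open>x < n\<close> by auto
  qed
qed

lemma hofH_mono: "mono hofH"
  unfolding mono_iff_le_Suc
proof
  fix n
  show "hofH n \<le> hofH (Suc n)"
    using hofH_Suc[of n] by auto
qed

lemma hofH_pos: "0 < n \<Longrightarrow> 0 < hofH n"
  using monoD[OF hofH_mono, of "Suc 0" n] by simp

fun narayana :: "nat \<Rightarrow> nat" where
  "narayana 0 = 1"
| "narayana (Suc 0) = 1"
| "narayana (Suc (Suc 0)) = 1"
| "narayana (Suc (Suc (Suc n))) = narayana (Suc (Suc n)) + narayana n"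

lemma narayana_rec: "narayana (n + 3) = narayana (n + 2) + narayana n"
  by (simp add: numeral_eq_Suc)

lemma narayana_pos: "0 < narayana n"
  by (induction n rule: narayana.induct) auto

lemma narayana_mono: "mono narayana"
  unfolding mono_iff_le_Suc
proof
  fix n show "narayana n \<le> narayana (Suc n)"
    by (induction n rule: narayana.induct) auto
qed

lemma narayana_less: "narayana (n + 2) < narayana (n + 3)"
  using narayana_rec[of n] narayana_pos[of n] by simp

lemma narayana_Suc_le_double: "narayana (Suc n) \<le> 2 * narayana n"
proof (cases "n < 2")
  case True
  then show ?thesis by (auto simp: less_Suc_eq numeral_2_eq_2)
next
  case False
  then obtain k where n: "n = k + 2"
    by (metis add.commute le_Suc_ex not_less)
  have "narayana k \<le> narayana (k + 2)"
    using monoD[OF narayana_mono] by simp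
  then show ?thesis
    using narayana_rec[of k] by (simp add: n)
qed

lemma le_narayana: "n \<le> narayana (n + 2)"
proof -
  have "strict_mono (\<lambda>n. narayana (n + 2))"
    using narayana_less by (intro strict_monoI_Suc) (simp add: numeral_eq_Suc)
  then show ?thesis
    by (rule strict_mono_imp_increasing)
qed

lemma narayana_block_exists:
  assumes "narayana 3 < N"
  obtains k where "narayana (k + 3) < N" "N \<le> narayana (k + 4)"
proof -
  have "N \<le> narayana (N + 3)"
    using le_narayana[of "N + 1"] by (simp add: numeral_eq_Suc)
  then obtain k where "\<not> N \<le> narayana (k + 3)" "N \<le> narayana (Suc k + 3)"
    using ex_least_nat_less[of "\<lambda>i. N \<le> narayana (i + 3)"] assms by auto
  then show ?thesis
    using that[of k] by (simp add: numeral_eq_Suc)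
qed

definition hofH_blocks_below :: "nat \<Rightarrow> bool" where
  "hofH_blocks_below n \<longleftrightarrow>
     (\<forall>m k. m < n \<longrightarrow> narayana (k + 3) < m \<longrightarrow> m \<le> narayana (k + 4) \<longrightarrow>
        hofH m = narayana (k + 2) + hofH (m - narayana (k + 3)))"

lemma hofH_blocks_belowD:
  assumes "hofH_blocks_below n" "m < n" "narayana (k + 3) < m" "m \<le> narayana (k + 4)"
  shows "hofH m = narayana (k + 2) + hofH (m - narayana (k + 3))"
  using assms unfolding hofH_blocks_below_def by blast

lemma hofH_narayana_if_blocks_below:
  assumes blocks: "hofH_blocks_below n" and "narayana (Suc j) < n"
  shows "hofH (narayana (Suc j)) = narayana j"
  using assms(2)
proof (induction j rule: less_induct)
  case (less j)
  show ?case
  proof (cases "j < 3")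
    case True
    then show ?thesis
      using hofH_2 by (auto simp: less_Suc_eq numeral_eq_Suc)
  next
    case False
    then obtain i where j: "j = i + 3"
      by (metis add.commute le_Suc_ex not_less)
    have "hofH (narayana (i + 4)) = narayana (i + 2) + hofH (narayana (i + 4) - narayana (i + 3))"
      using hofH_blocks_belowD[OF blocks, of "narayana (i + 4)" i] narayana_less[of "Suc i"]
        less.prems j
      by (simp add: numeral_eq_Suc)
    also have "narayana (i + 4) - narayana (i + 3) = narayana (Suc i)"
      using narayana_rec[of "Suc i"] by (simp add: numeral_eq_Suc)
    also have "hofH (narayana (Suc i)) = narayana i"
      using less.IH[of i] less.prems monoD[OF narayana_mono, of "Suc i" "Suc j"] j by simp
    finally show ?thesis
      using narayana_rec[of i] j by (simp add: numeral_eq_Suc)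
  qed
qed

lemma hofH_block_start:
  assumes blocks: "hofH_blocks_below (narayana (k + 3) + 1)"
  shows "hofH (narayana (k + 3) + 1) = narayana (k + 2) + 1"
proof -
  have "hofH (narayana (Suc i)) = narayana i" if "i \<le> k + 2" for i
    using hofH_narayana_if_blocks_below[OF blocks] monoD[OF narayana_mono, of "Suc i" "k + 3"] that
    by simp
  from this[of "k + 2"] this[of "k + 1"] this[of k]
  have "hofH (hofH (hofH (narayana (k + 3)))) = narayana k"
    by (simp add: numeral_eq_Suc)
  then show ?thesis
    using hofH_Suc_rec[of "narayana (k + 3)"] narayana_pos[of "k + 3"] narayana_rec[of k] by simp
qed

(* With n = a (j+5) + t, the three nested calls in H n = n - H (H (H (n - 1))) fall into
   the blocks starting at a (j+5), a (j+4) and a (j+3), each shifting the value down one index. *)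
lemma hofH_block_continue:
  assumes blocks: "hofH_blocks_below (narayana (j + 5) + t)"
    and "2 \<le> t" "t \<le> narayana (j + 3)"
  shows "hofH (narayana (j + 5) + t) = narayana (j + 4) + hofH t"
proof -
  define n where "n = narayana (j + 5) + t"
  define s where "s = hofH (t - 1)"
  define s' where "s' = hofH s"
  note below = hofH_blocks_belowD[OF blocks[folded n_def]]
  have hofH_narayana: "hofH (narayana (Suc i)) = narayana i" if "i \<le> j + 4" for i
    using hofH_narayana_if_blocks_below[OF blocks] monoD[OF narayana_mono, of "Suc i" "j + 5"]
      that \<open>2 \<le> t\<close>
    by simp
  have "0 < s" "0 < s'"
    using \<open>2 \<le> t\<close> by (simp_all add: s_def s'_def hofH_pos)
  have "s \<le> narayana (j + 2)"
    using monoD[OF hofH_mono, of "t - 1" "narayana (j + 3)"] \<open>t \<le> narayana (j + 3)\<close>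
      hofH_narayana[of "j + 2"]
    by (simp add: s_def numeral_eq_Suc)
  have "s' \<le> narayana (j + 1)"
    using monoD[OF hofH_mono \<open>s \<le> narayana (j + 2)\<close>] hofH_narayana[of "j + 1"]
    by (simp add: s'_def)
  have "hofH (n - 1) = narayana (j + 4) + s"
    using below[of "n - 1" "j + 2"] \<open>2 \<le> t\<close> \<open>t \<le> narayana (j + 3)\<close>
    by (simp add: n_def s_def numeral_eq_Suc)
  moreover have "hofH (narayana (j + 4) + s) = narayana (j + 3) + s'"
    using below[of "narayana (j + 4) + s" "j + 1"] \<open>0 < s\<close> \<open>s \<le> narayana (j + 2)\<close> \<open>2 \<le> t\<close>
    by (simp add: n_def s'_def numeral_eq_Suc add.assoc)
  moreover have "hofH (narayana (j + 3) + s') = narayana (j + 2) + hofH s'"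
    using below[of "narayana (j + 3) + s'" j] \<open>0 < s'\<close> \<open>s' \<le> narayana (j + 1)\<close> \<open>2 \<le> t\<close>
    by (simp add: n_def numeral_eq_Suc add.assoc)
  ultimately have "hofH (hofH (hofH (n - 1))) = narayana (j + 2) + hofH s'"
    by (simp add: s'_def)
  then have "hofH n = n - (narayana (j + 2) + hofH s')"
    using hofH_rec[of n] \<open>2 \<le> t\<close> by (simp add: n_def)
  moreover have "n = narayana (j + 4) + narayana (j + 2) + t"
    by (simp add: n_def numeral_eq_Suc)
  moreover have "hofH t = t - hofH s'" and "hofH s' \<le> t"
    using hofH_rec[of t] \<open>2 \<le> t\<close> hofH_le[of s'] hofH_le[of s] hofH_le[of "t - 1"]
    by (simp_all add: s_def s'_def)
  ultimately show ?thesis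
    unfolding n_def[symmetric] by simp
qed

lemma hofH_block:
  assumes "narayana (k + 3) < n" "n \<le> narayana (k + 4)"
  shows "hofH n = narayana (k + 2) + hofH (n - narayana (k + 3))"
  using assms
proof (induction n arbitrary: k rule: less_induct)
  case (less n)
  have blocks: "hofH_blocks_below n"
    using less.IH unfolding hofH_blocks_below_def by blast
  define t where "t = n - narayana (k + 3)"
  have n: "n = narayana (k + 3) + t" and "0 < t" and "t \<le> narayana (k + 1)"
    using less.prems narayana_rec[of "Suc k"] by (auto simp: t_def numeral_eq_Suc)
  show ?case
  proof (cases "t = 1")
    case True
    then show ?thesis
      using hofH_block_start[of k] blocks n by simp
  next
    case False
    then have "2 \<le> t"
      using \<open>0 < t\<close> by linarith
    then have "2 \<le> narayana (k + 1)"
      using \<open>t \<le> narayana (k + 1)\<close> by linarith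
    then obtain j where k: "k = j + 2"
      by (cases k rule: narayana.cases) (auto simp: numeral_eq_Suc)
    show ?thesis
      using hofH_block_continue[of j t] blocks n \<open>2 \<le> t\<close> \<open>t \<le> narayana (k + 1)\<close>
      by (simp add: k numeral_eq_Suc)
  qed
qed

definition hofH_sum :: "'a::comm_semiring_1 \<Rightarrow> nat \<Rightarrow> 'a" where
  "hofH_sum z N = (\<Sum>n = 1..N. z ^ hofH n)"

lemma hofH_sum_0 [simp]: "hofH_sum z 0 = 0"
  by (simp add: hofH_sum_def)

lemma hofH_sum_Suc: "hofH_sum z (Suc N) = hofH_sum z N + z ^ hofH (Suc N)"
  by (simp add: hofH_sum_def)

lemma hofH_sum_block:
  assumes "t \<le> narayana (k + 1)"
  shows "hofH_sum z (narayana (k + 3) + t) =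
           hofH_sum z (narayana (k + 3)) + z ^ narayana (k + 2) * hofH_sum z t"
  using assms
proof (induction t)
  case (Suc t)
  have "hofH (narayana (k + 3) + Suc t) = narayana (k + 2) + hofH (Suc t)"
    using hofH_block[of k "narayana (k + 3) + Suc t"] Suc.prems narayana_rec[of "Suc k"]
    by (simp add: numeral_eq_Suc)
  then show ?case
    using Suc by (simp add: hofH_sum_Suc power_add algebra_simps)
qed simp

lemma hofH_sum_narayana_rec:
  "hofH_sum z (narayana (k + 4)) =
     hofH_sum z (narayana (k + 3)) + z ^ narayana (k + 2) * hofH_sum z (narayana (k + 1))"
  using hofH_sum_block[of "narayana (k + 1)" k z] narayana_rec[of "Suc k"]
  by (simp add: numeral_eq_Suc)

lemma norm_hofH_sum_le:
  fixes z :: complex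
  assumes "norm z = 1"
  shows "norm (hofH_sum z N) \<le> N"
  using norm_sum[of "\<lambda>n. z ^ hofH n" "{1..N}"] assms by (simp add: hofH_sum_def norm_power)

lemma norm_hofH_sum_narayana_subadditive:
  fixes z :: complex
  assumes "norm z = 1"
  shows "norm (hofH_sum z (narayana (k + 4))) \<le>
           norm (hofH_sum z (narayana (k + 3))) + norm (hofH_sum z (narayana (k + 1)))"
  using norm_triangle_ineq[of "hofH_sum z (narayana (k + 3))"
      "z ^ narayana (k + 2) * hofH_sum z (narayana (k + 1))"] assms
  by (simp add: hofH_sum_narayana_rec norm_mult norm_power)

lemma norm_hofH_sum_narayana_le:
  fixes z :: complex
  assumes "norm z = 1"
  shows "norm (hofH_sum z (narayana (k + 6))) \<le>
           norm (1 + z ^ narayana (k + 4)) * norm (hofH_sum z (narayana (k + 3)))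
           + norm (hofH_sum z (narayana (k + 2))) + norm (hofH_sum z (narayana (k + 1)))"
proof -
  have unit: "norm (z ^ j) = 1" for j
    by (simp add: norm_power assms)
  have eq: "hofH_sum z (narayana (k + 6)) =
          (1 + z ^ narayana (k + 4)) * hofH_sum z (narayana (k + 3))
          + z ^ narayana (k + 3) * hofH_sum z (narayana (k + 2))
          + z ^ narayana (k + 2) * hofH_sum z (narayana (k + 1))"
    using hofH_sum_narayana_rec[of z "k + 2"] hofH_sum_narayana_rec[of z "k + 1"]
      hofH_sum_narayana_rec[of z k]
    by (simp add: algebra_simps numeral_eq_Suc)
  have "norm (hofH_sum z (narayana (k + 6))) \<le>
          norm ((1 + z ^ narayana (k + 4)) * hofH_sum z (narayana (k + 3)))
          + norm (z ^ narayana (k + 3) * hofH_sum z (narayana (k + 2)))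
          + norm (z ^ narayana (k + 2) * hofH_sum z (narayana (k + 1)))"
    unfolding eq by (rule order_trans[OF norm_triangle_ineq add_right_mono[OF norm_triangle_ineq]])
  then show ?thesis
    by (simp add: norm_mult unit)
qed

lemma le_power_two_mult:
  fixes a :: "nat \<Rightarrow> real"
  assumes "\<And>k. a (Suc k) \<le> 2 * a k"
  shows "a (p + d) \<le> 2 ^ d * a p"
proof (induction d)
  case (Suc d)
  then show ?case
    using assms[of "p + d"] by simp
qed simp

lemma narayana_type_rec_le:
  fixes a e :: "nat \<Rightarrow> real"
  assumes e_rec: "\<And>j. p \<le> j \<Longrightarrow> e (j + 2) + e j \<le> e (j + 3)"
    and a_rec: "\<And>j. a (j + 3) \<le> a (j + 2) + a j"
    and start: "\<And>d. d < 3 \<Longrightarrow> a (p + d) \<le> e (p + d)"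
  shows "a (p + d) \<le> e (p + d)"
proof (induction d rule: less_induct)
  case (less d)
  show ?case
  proof (cases "d < 3")
    case False
    define d' where "d' = d - 3"
    have d: "d = d' + 3"
      using False by (simp add: d'_def)
    have "a (p + d) \<le> a (p + (d' + 2)) + a (p + d')"
      using a_rec[of "p + d'"] by (simp add: d add.assoc)
    also have "\<dots> \<le> e (p + (d' + 2)) + e (p + d')"
      using less.IH[of "d' + 2"] less.IH[of d'] by (simp add: d)
    also have "\<dots> \<le> e (p + d)"
      using e_rec[of "p + d'"] by (simp add: d add.assoc)
    finally show ?thesis .
  qed (rule start)
qed

(* The slack e k = R * a k - r k satisfies e (k+3) >= e (k+2) + e k and is nonnegative from p
   on; the lossy step gives e (q+5) >= c R a (q+2), which the recurrence propagates to
   e k >= c R a k / 32. *)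
lemma ratio_bound_contracts:
  fixes a r :: "nat \<Rightarrow> real"
  assumes a_rec: "\<And>k. a (k + 3) = a (k + 2) + a k"
    and a_nonneg: "\<And>k. 0 \<le> a k"
    and a_double: "\<And>k. a (Suc k) \<le> 2 * a k"
    and r_rec: "\<And>k. r (k + 3) \<le> r (k + 2) + r k"
    and loss: "r (q + 5) \<le> (2 - c) * r (q + 2) + r (q + 1) + r q"
    and c: "0 \<le> c" "c \<le> 2" and R: "0 \<le> R"
    and bound: "\<And>k. p \<le> k \<Longrightarrow> r k \<le> R * a k"
    and "p \<le> q" "q + 5 \<le> k"
  shows "r k \<le> (1 - c / 32) * R * a k"
proof -
  define e where "e k = R * a k - r k" for k
  have e_nonneg: "0 \<le> e k" if "p \<le> k" for k
    using bound[OF that] by (simp add: e_def)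
  have e_rec: "e (k + 2) + e k \<le> e (k + 3)" for k
    using r_rec[of k] a_rec[of k] by (simp add: e_def algebra_simps)
  have "a (q + 5) = 2 * a (q + 2) + a (q + 1) + a q"
    using a_rec[of q] a_rec[of "q + 1"] a_rec[of "q + 2"] by (simp add: numeral_eq_Suc)
  moreover have "(2 - c) * r (q + 2) \<le> (2 - c) * (R * a (q + 2))"
    using bound[of "q + 2"] \<open>p \<le> q\<close> c by (intro mult_left_mono) auto
  ultimately have gain: "c * R * a (q + 2) \<le> e (q + 5)"
    using loss bound[of "q + 1"] bound[of q] \<open>p \<le> q\<close> by (simp add: e_def algebra_simps)
  have start: "c * R / 32 * a (q + 5 + d) \<le> e (q + 5 + d)" if "d < 3" for d
  proof -
    have "q + 5 + d = (q + 2) + (3 + d)"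
      by simp
    then have "a (q + 5 + d) \<le> 2 ^ (3 + d) * a (q + 2)"
      using le_power_two_mult[of a, OF a_double] by presburger
    also have "\<dots> \<le> 32 * a (q + 2)"
      using that a_nonneg[of "q + 2"] by (intro mult_right_mono) (auto simp: less_Suc_eq numeral_eq_Suc)
    finally have "c * R / 32 * a (q + 5 + d) \<le> c * R / 32 * (32 * a (q + 2))"
      using c R by (intro mult_left_mono) auto
    also have "\<dots> = c * R * a (q + 2)"
      by simp
    also have "\<dots> \<le> e (q + 5)"
      by (fact gain)
    also have "\<dots> \<le> e (q + 5 + d)"
      using that e_rec[of "q + 3"] e_rec[of "q + 4"] e_nonneg[of "q + 3"] e_nonneg[of "q + 4"] \<open>p \<le> q\<close>
      by (auto simp: less_Suc_eq numeral_eq_Suc)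
    finally show ?thesis .
  qed
  have "c * R / 32 * a (q + 5 + d) \<le> e (q + 5 + d)" for d
    by (rule narayana_type_rec_le[where a = "\<lambda>k. c * R / 32 * a k"])
       (use e_rec a_rec start in \<open>simp_all add: distrib_left\<close>)
  from this[of "k - (q + 5)"] show ?thesis
    using \<open>q + 5 \<le> k\<close> by (simp add: e_def algebra_simps)
qed

lemma ratio_bound_decay:
  fixes a r :: "nat \<Rightarrow> real"
  assumes a_rec: "\<And>k. a (k + 3) = a (k + 2) + a k"
    and a_nonneg: "\<And>k. 0 \<le> a k"
    and a_double: "\<And>k. a (Suc k) \<le> 2 * a k"
    and r_rec: "\<And>k. r (k + 3) \<le> r (k + 2) + r k"
    and loss: "\<And>k. \<exists>q. k \<le> q \<and> q \<le> k + 2 \<and> r (q + 5) \<le> (2 - c) * r (q + 2) + r (q + 1) + r q"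
    and c: "0 \<le> c" "c \<le> 2"
    and r_le: "\<And>k. r k \<le> a k"
  shows "7 * t \<le> k \<Longrightarrow> r k \<le> (1 - c / 32) ^ t * a k"
proof (induction t arbitrary: k)
  case 0
  then show ?case using r_le by simp
next
  case (Suc t)
  obtain q where q: "7 * t \<le> q" "q \<le> 7 * t + 2"
    and loss_q: "r (q + 5) \<le> (2 - c) * r (q + 2) + r (q + 1) + r q"
    using loss[of "7 * t"] by blast
  have "r k \<le> (1 - c / 32) * (1 - c / 32) ^ t * a k"
    by (rule ratio_bound_contracts[OF a_rec a_nonneg a_double r_rec loss_q,
          where p = "7 * t" and R = "(1 - c / 32) ^ t"])
       (use c Suc q in auto)
  then show ?case
    by (simp add: mult.assoc)
qed

lemma ratio_tendsto_zero:
  fixes a r :: "nat \<Rightarrow> real"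
  assumes a_rec: "\<And>k. a (k + 3) = a (k + 2) + a k"
    and a_pos: "\<And>k. 0 < a k"
    and a_double: "\<And>k. a (Suc k) \<le> 2 * a k"
    and r_nonneg: "\<And>k. 0 \<le> r k"
    and r_rec: "\<And>k. r (k + 3) \<le> r (k + 2) + r k"
    and loss: "\<And>k. \<exists>q. k \<le> q \<and> q \<le> k + 2 \<and> r (q + 5) \<le> (2 - c) * r (q + 2) + r (q + 1) + r q"
    and c: "0 < c" "c \<le> 2"
    and r_le: "\<And>k. r k \<le> a k"
  shows "(\<lambda>k. r k / a k) \<longlonglongrightarrow> 0"
proof (rule LIMSEQ_I)
  fix \<epsilon> :: real
  assume "0 < \<epsilon>"
  have a_nonneg: "0 \<le> a k" for k
    using a_pos[of k] by simp
  have "1 - c / 32 < 1"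
    using c by simp
  with \<open>0 < \<epsilon>\<close> obtain t where t: "(1 - c / 32) ^ t < \<epsilon>"
    using real_arch_pow_inv by blast
  have "norm (r k / a k - 0) < \<epsilon>" if "7 * t \<le> k" for k
  proof -
    have "r k \<le> (1 - c / 32) ^ t * a k"
      using ratio_bound_decay[OF a_rec a_nonneg a_double r_rec loss _ _ r_le that] c by simp
    then have "r k / a k \<le> (1 - c / 32) ^ t"
      using a_pos[of k] by (simp add: divide_le_eq)
    then show ?thesis
      using t r_nonneg[of k] a_pos[of k] by simp
  qed
  then show "\<exists>no. \<forall>k\<ge>no. norm (r k / a k - 0) < \<epsilon>"
    by blast
qed

lemma power_narayana_ne_one:
  fixes z :: "'a::monoid_mult"
  assumes "z \<noteq> 1"
  shows "\<exists>i. k \<le> i \<and> i \<le> k + 2 \<and> z ^ narayana i \<noteq> 1"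
proof (induction k)
  case 0
  show ?case
    using assms by (intro exI[of _ 0]) simp
next
  case (Suc k)
  then obtain i where i: "k \<le> i" "i \<le> k + 2" "z ^ narayana i \<noteq> 1"
    by blast
  show ?case
  proof (cases "i = k")
    case True
    have "z ^ narayana (k + 3) = z ^ narayana (k + 2) * z ^ narayana k"
      by (simp add: narayana_rec power_add)
    then have "z ^ narayana (k + 1) \<noteq> 1 \<or> z ^ narayana (k + 2) \<noteq> 1 \<or> z ^ narayana (k + 3) \<noteq> 1"
      using i(3) True by auto
    then show ?thesis
    proof (elim disjE)
      assume "z ^ narayana (k + 1) \<noteq> 1"
      then show ?thesis by (intro exI[of _ "k + 1"]) simp
    next
      assume "z ^ narayana (k + 2) \<noteq> 1"
      then show ?thesis by (intro exI[of _ "k + 2"]) simp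
    next
      assume "z ^ narayana (k + 3) \<noteq> 1"
      then show ?thesis by (intro exI[of _ "k + 3"]) simp
    qed
  next
    case False
    then show ?thesis
      using i by (intro exI[of _ i]) auto
  qed
qed

lemma norm_one_plus_less_two:
  fixes w :: complex
  assumes "norm w = 1" "w \<noteq> 1"
  shows "norm (1 + w) < 2"
proof -
  have "norm (1 + w) \<le> 2"
    using norm_triangle_ineq[of 1 w] assms by simp
  moreover have "norm (1 + w) \<noteq> 2"
  proof
    assume "norm (1 + w) = 2"
    then have "norm (1::complex) *\<^sub>R w = norm w *\<^sub>R 1"
      using norm_triangle_eq[of 1 w] assms by simp
    then show False
      using assms by simp
  qed
  ultimately show ?thesis
    by simp
qed

lemma root_of_unity_gap:
  fixes z :: complex
  assumes "z ^ m = 1" "0 < m"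
  obtains c where "0 < c" "c \<le> 2" "\<And>j. z ^ j \<noteq> 1 \<Longrightarrow> norm (1 + z ^ j) \<le> 2 - c"
proof -
  define W where "W = {w :: complex. w ^ m = 1 \<and> w \<noteq> 1}"
  define c where "c = Min (insert 1 ((\<lambda>w. 2 - norm (1 + w)) ` W))"
  have "finite W"
    using finite_roots_unity[of m] assms(2) by (auto simp: W_def intro: finite_subset)
  moreover have "norm (1 + w) < 2" if "w \<in> W" for w
    using that assms(2) power_eq_1_iff[of w m] norm_one_plus_less_two by (auto simp: W_def)
  ultimately have "0 < c"
    by (auto simp: c_def)
  moreover have "c \<le> 2"
    unfolding c_def using \<open>finite W\<close> by (intro order_trans[OF Min_le]) auto
  moreover have "norm (1 + z ^ j) \<le> 2 - c" if "z ^ j \<noteq> 1" for j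
  proof -
    have "(z ^ j) ^ m = (z ^ m) ^ j"
      by (simp add: mult.commute flip: power_mult)
    then have "(z ^ j) ^ m = 1"
      using assms(1) by simp
    then have "z ^ j \<in> W"
      using that by (simp add: W_def)
    then have "c \<le> 2 - norm (1 + z ^ j)"
      using \<open>finite W\<close> unfolding c_def by (intro Min_le) auto
    then show ?thesis
      by simp
  qed
  ultimately show thesis
    using that by blast
qed

lemma hofH_sum_narayana_ratio_tendsto_zero:
  fixes z :: complex
  assumes "z ^ m = 1" "0 < m" "z \<noteq> 1"
  shows "(\<lambda>k. norm (hofH_sum z (narayana (Suc k))) / narayana (Suc k)) \<longlonglongrightarrow> 0"
proof -
  have unit: "norm z = 1"
    using power_eq_1_iff[OF assms(1)] assms(2) by simp
  obtain c where c: "0 < c" "c \<le> 2" and gap: "\<And>j. z ^ j \<noteq> 1 \<Longrightarrow> norm (1 + z ^ j) \<le> 2 - c"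
    using root_of_unity_gap[OF assms(1,2)] by blast
  define r where "r k = norm (hofH_sum z (narayana (Suc k)))" for k
  have r_rec: "r (k + 3) \<le> r (k + 2) + r k" for k
    using norm_hofH_sum_narayana_subadditive[OF unit, of k] by (simp add: r_def numeral_eq_Suc)
  have loss: "\<exists>q. k \<le> q \<and> q \<le> k + 2 \<and> r (q + 5) \<le> (2 - c) * r (q + 2) + r (q + 1) + r q" for k
  proof -
    obtain i where i: "k + 4 \<le> i" "i \<le> k + 6" "z ^ narayana i \<noteq> 1"
      using power_narayana_ne_one[OF assms(3), of "k + 4"] by auto
    define q where "q = i - 4"
    have q: "k \<le> q" "q \<le> k + 2" "z ^ narayana (q + 4) \<noteq> 1"
      using i by (simp_all add: q_def)
    have "r (q + 5) \<le> norm (1 + z ^ narayana (q + 4)) * r (q + 2) + r (q + 1) + r q"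
      using norm_hofH_sum_narayana_le[OF unit, of q] by (simp add: r_def numeral_eq_Suc)
    also have "\<dots> \<le> (2 - c) * r (q + 2) + r (q + 1) + r q"
      using gap[OF q(3)] by (simp add: mult_right_mono r_def)
    finally show ?thesis
      using q by blast
  qed
  show ?thesis
    unfolding r_def[symmetric]
  proof (rule ratio_tendsto_zero[OF _ _ _ _ r_rec loss c])
    show "real (narayana (Suc (k + 3))) = real (narayana (Suc (k + 2))) + real (narayana (Suc k))" for k
      by (simp add: numeral_eq_Suc)
    show "0 < real (narayana (Suc k))" for k
      by (simp add: narayana_pos)
    show "real (narayana (Suc (Suc k))) \<le> 2 * real (narayana (Suc k))" for k
      using narayana_Suc_le_double[of "Suc k"] by simp
    show "0 \<le> r k" "r k \<le> real (narayana (Suc k))" for k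
      using norm_hofH_sum_le[OF unit] by (simp_all add: r_def)
  qed
qed

lemma norm_hofH_sum_le_eps:
  fixes z :: complex and \<epsilon> :: real
  assumes unit: "norm z = 1" and "0 \<le> \<epsilon>"
    and small: "\<And>k. K \<le> k \<Longrightarrow> norm (hofH_sum z (narayana (k + 3))) \<le> \<epsilon> * narayana (k + 3)"
  shows "norm (hofH_sum z N) \<le> \<epsilon> * N + narayana (K + 3)"
proof (induction N rule: less_induct)
  case (less N)
  show ?case
  proof (cases "N \<le> narayana (K + 3)")
    case True
    then have "real N \<le> narayana (K + 3)"
      by simp
    moreover have "0 \<le> \<epsilon> * N"
      using \<open>0 \<le> \<epsilon>\<close> by simp
    ultimately show ?thesis
      using norm_hofH_sum_le[OF unit, of N] by linarith
  next
    case False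
    moreover have "narayana 3 \<le> narayana (K + 3)"
      using monoD[OF narayana_mono] by simp
    ultimately have "narayana 3 < N"
      by linarith
    then obtain k where k: "narayana (k + 3) < N" "N \<le> narayana (k + 4)"
      by (rule narayana_block_exists)
    have "K \<le> k"
    proof (rule ccontr)
      assume "\<not> K \<le> k"
      then have "narayana (k + 4) \<le> narayana (K + 3)"
        using monoD[OF narayana_mono, of "k + 4" "K + 3"] by simp
      then show False
        using k False by simp
    qed
    define t where "t = N - narayana (k + 3)"
    have N: "N = narayana (k + 3) + t" and "t \<le> narayana (k + 1)" and "t < N"
      using k narayana_rec[of "Suc k"] narayana_pos[of "k + 3"] by (auto simp: t_def numeral_eq_Suc)
    have "norm (hofH_sum z N) \<le> norm (hofH_sum z (narayana (k + 3))) + norm (hofH_sum z t)"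
      unfolding N hofH_sum_block[OF \<open>t \<le> narayana (k + 1)\<close>]
      by (rule order_trans[OF norm_triangle_ineq]) (simp add: norm_mult norm_power unit)
    also have "\<dots> \<le> \<epsilon> * narayana (k + 3) + (\<epsilon> * t + narayana (K + 3))"
      using small[OF \<open>K \<le> k\<close>] less.IH[OF \<open>t < N\<close>] by simp
    also have "\<dots> = \<epsilon> * N + narayana (K + 3)"
      by (simp add: N algebra_simps)
    finally show ?thesis .
  qed
qed

lemma hofH_sum_tendsto_zero:
  fixes z :: complex
  assumes "z ^ m = 1" "0 < m" "z \<noteq> 1"
  shows "(\<lambda>N. hofH_sum z N / of_nat N) \<longlonglongrightarrow> 0"
proof (rule LIMSEQ_I)
  fix \<epsilon> :: real
  assume "0 < \<epsilon>"
  have unit: "norm z = 1"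
    using power_eq_1_iff[OF assms(1)] assms(2) by simp
  obtain K where K: "\<And>k. K \<le> k \<Longrightarrow>
      norm (hofH_sum z (narayana (Suc k))) / narayana (Suc k) < \<epsilon> / 2"
    using LIMSEQ_D[OF hofH_sum_narayana_ratio_tendsto_zero[OF assms], of "\<epsilon> / 2"] \<open>0 < \<epsilon>\<close>
    by auto
  have "norm (hofH_sum z (narayana (k + 3))) \<le> \<epsilon> / 2 * narayana (k + 3)" if "K \<le> k" for k
  proof -
    have "Suc (k + 2) = k + 3"
      by simp
    then have "norm (hofH_sum z (narayana (k + 3))) / narayana (k + 3) < \<epsilon> / 2"
      using K[of "k + 2"] that by (simp only:)
    then show ?thesis
      using narayana_pos[of "k + 3"] by (simp add: pos_divide_less_eq)
  qed
  then have bound: "norm (hofH_sum z N) \<le> \<epsilon> / 2 * N + narayana (K + 3)" for N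
    using norm_hofH_sum_le_eps[of z "\<epsilon> / 2" K N, OF unit] \<open>0 < \<epsilon>\<close> by simp
  obtain N0 :: nat where N0: "2 * narayana (K + 3) / \<epsilon> < N0"
    using reals_Archimedean2 by blast
  have "norm (hofH_sum z N / of_nat N - 0) < \<epsilon>" if "N0 \<le> N" for N
  proof -
    have "2 * narayana (K + 3) / \<epsilon> < N"
      using N0 that by (meson of_nat_le_iff less_le_trans)
    then have "2 * narayana (K + 3) < \<epsilon> * N"
      using \<open>0 < \<epsilon>\<close> by (simp add: pos_divide_less_eq mult.commute)
    then have "norm (hofH_sum z N) < \<epsilon> * N"
      using bound[of N] by simp
    moreover have "0 < N"
      using \<open>2 * narayana (K + 3) < \<epsilon> * N\<close> by (cases N) auto
    ultimately show ?thesis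
      by (simp add: norm_divide field_simps)
  qed
  then show "\<exists>N0. \<forall>N\<ge>N0. norm (hofH_sum z N / of_nat N - 0) < \<epsilon>"
    by blast
qed

lemma exp_two_pi_i_power_eq_iff:
  assumes "0 < m"
  shows "exp (2 * of_real pi * \<i> / of_nat m) ^ a = exp (2 * of_real pi * \<i> / of_nat m) ^ b
           \<longleftrightarrow> a mod m = b mod m"
proof -
  have "exp (2 * of_real pi * \<i> / of_nat m) ^ k = exp (2 * of_real pi * \<i> * of_nat k / of_nat m)"
    for k
  proof -
    have "exp (2 * of_real pi * \<i> / of_nat m) ^ k = exp (of_nat k * (2 * of_real pi * \<i> / of_nat m))"
      by (rule exp_of_nat_mult[symmetric])
    then show ?thesis
      by (simp add: field_simps mult.commute)
  qed
  then show ?thesis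
    using complex_root_unity_eq[of m a b] assms by simp
qed

lemma root_of_unity_filter:
  assumes "0 < m"
  defines "w \<equiv> exp (2 * of_real pi * \<i> / of_nat m)"
  shows "(\<Sum>t<m. (w ^ t) ^ a / (w ^ t) ^ b) = (if a mod m = b mod m then of_nat m else 0)"
proof -
  have w_eq: "w ^ c = w ^ d \<longleftrightarrow> c mod m = d mod m" for c d
    unfolding w_def using exp_two_pi_i_power_eq_iff[OF assms(1)] .
  define u where "u = w ^ a / w ^ b"
  have "w \<noteq> 0"
    by (simp add: w_def)
  have "(w ^ t) ^ a / (w ^ t) ^ b = u ^ t" for t
    by (simp add: u_def power_divide mult.commute flip: power_mult)
  moreover have "u ^ m = 1"
  proof -
    have "w ^ m = 1"
      using w_eq[of m 0] by simp
    have "u ^ m = (w ^ m) ^ a / (w ^ m) ^ b"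
      by (simp add: u_def power_divide mult.commute flip: power_mult)
    then show ?thesis
      using \<open>w ^ m = 1\<close> by simp
  qed
  moreover have "u = 1 \<longleftrightarrow> a mod m = b mod m"
    using w_eq[of a b] \<open>w \<noteq> 0\<close> by (simp add: u_def)
  ultimately show ?thesis
    by (simp add: sum_gp_strict)
qed

lemma card_residue_class_eq_exp_sums:
  fixes f :: "nat \<Rightarrow> nat"
  assumes "0 < m" "j < m"
  defines "w \<equiv> exp (2 * of_real pi * \<i> / of_nat m)"
  shows "of_nat (card {n \<in> {1..N}. f n mod m = j}) * of_nat m
           = (\<Sum>t<m. (\<Sum>n = 1..N. (w ^ t) ^ f n) / (w ^ t) ^ j)"
proof -
  have "of_nat (card {n \<in> {1..N}. f n mod m = j}) * (of_nat m :: complex)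
          = (\<Sum>n \<in> {n \<in> {1..N}. f n mod m = j}. of_nat m)"
    by simp
  also have "\<dots> = (\<Sum>n = 1..N. if f n mod m = j then of_nat m else 0)"
    by (rule sum.inter_filter) simp
  also have "\<dots> = (\<Sum>n = 1..N. \<Sum>t<m. (w ^ t) ^ f n / (w ^ t) ^ j)"
  proof (rule sum.cong[OF refl])
    fix n
    show "(if f n mod m = j then of_nat m else 0) = (\<Sum>t<m. (w ^ t) ^ f n / (w ^ t) ^ j)"
      using root_of_unity_filter[OF assms(1), of "f n" j] assms(2) unfolding w_def by simp
  qed
  also have "\<dots> = (\<Sum>t<m. (\<Sum>n = 1..N. (w ^ t) ^ f n) / (w ^ t) ^ j)"
    by (subst sum.swap) (simp add: sum_divide_distrib)
  finally show ?thesis .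
qed

lemma root_power_sum_average_tendsto:
  fixes f :: "nat \<Rightarrow> nat"
  assumes "0 < m" "t < m"
    and exp_sums: "\<And>z :: complex. z ^ m = 1 \<Longrightarrow> z \<noteq> 1 \<Longrightarrow>
                     (\<lambda>N. (\<Sum>n = 1..N. z ^ f n) / of_nat N) \<longlonglongrightarrow> 0"
  defines "w \<equiv> exp (2 * of_real pi * \<i> / of_nat m)"
  shows "(\<lambda>N. (\<Sum>n = 1..N. (w ^ t) ^ f n) / (w ^ t) ^ j / of_nat N)
           \<longlonglongrightarrow> (if t = 0 then 1 else 0)"
proof (cases "t = 0")
  case True
  have "\<forall>\<^sub>F N in sequentially. 1 = (\<Sum>n = 1..N. (w ^ t) ^ f n) / (w ^ t) ^ j / of_nat N"
    using True by (intro eventually_sequentiallyI[of 1]) simp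
  then have "(\<lambda>N. (\<Sum>n = 1..N. (w ^ t) ^ f n) / (w ^ t) ^ j / of_nat N) \<longlonglongrightarrow> 1"
    by (rule Lim_transform_eventually[OF tendsto_const])
  then show ?thesis
    using True by simp
next
  case False
  have w_eq: "w ^ c = w ^ d \<longleftrightarrow> c mod m = d mod m" for c d
    unfolding w_def using exp_two_pi_i_power_eq_iff[OF assms(1)] .
  have "(w ^ t) ^ m = 1"
    using w_eq[of "t * m" 0] by (simp add: power_mult)
  moreover have "w ^ t \<noteq> 1"
    using w_eq[of t 0] assms(2) False by simp
  ultimately have "(\<lambda>N. (\<Sum>n = 1..N. (w ^ t) ^ f n) / of_nat N) \<longlonglongrightarrow> 0"
    by (rule exp_sums)
  then have "(\<lambda>N. 1 / (w ^ t) ^ j * ((\<Sum>n = 1..N. (w ^ t) ^ f n) / of_nat N))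
               \<longlonglongrightarrow> 1 / (w ^ t) ^ j * 0"
    by (rule tendsto_mult_left)
  then show ?thesis
    using False by simp
qed

lemma residue_density_from_exp_sums:
  fixes f :: "nat \<Rightarrow> nat"
  assumes "0 < m" "j < m"
    and exp_sums: "\<And>z :: complex. z ^ m = 1 \<Longrightarrow> z \<noteq> 1 \<Longrightarrow>
                     (\<lambda>N. (\<Sum>n = 1..N. z ^ f n) / of_nat N) \<longlonglongrightarrow> 0"
  shows "(\<lambda>N. real (card {n \<in> {1..N}. f n mod m = j}) / real N) \<longlonglongrightarrow> 1 / real m"
proof -
  define w where "w = exp (2 * of_real pi * \<i> / of_nat m)"
  define E where "E t N = (\<Sum>n = 1..N. (w ^ t) ^ f n) / (w ^ t) ^ j / of_nat N" for t N
  have E_lim: "(\<lambda>N. E t N) \<longlonglongrightarrow> (if t = 0 then 1 else 0)" if "t < m" for t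
    unfolding E_def w_def by (rule root_power_sum_average_tendsto[OF assms(1) that exp_sums])
  have "(\<lambda>N. (\<Sum>t<m. E t N)) \<longlonglongrightarrow> (\<Sum>t<m. if t = 0 then 1 else 0)"
    by (rule tendsto_sum) (use E_lim in auto)
  then have "(\<lambda>N. (\<Sum>t<m. E t N) / of_nat m) \<longlonglongrightarrow> 1 / of_nat m"
    using assms(1) by (intro tendsto_divide tendsto_const) simp_all
  moreover have eq: "(\<Sum>t<m. E t N) / of_nat m
                   = complex_of_real (real (card {n \<in> {1..N}. f n mod m = j}) / real N)" for N
  proof -
    have "(\<Sum>t<m. E t N) = of_nat (card {n \<in> {1..N}. f n mod m = j}) * of_nat m / of_nat N"
      unfolding E_def sum_divide_distrib[symmetric] w_def
      by (simp only: card_residue_class_eq_exp_sums[OF assms(1,2)])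
    then show ?thesis
      using assms(1) by simp
  qed
  ultimately have "(\<lambda>N. complex_of_real (real (card {n \<in> {1..N}. f n mod m = j}) / real N))
                     \<longlonglongrightarrow> 1 / of_nat m"
    by (simp only:)
  then have "(\<lambda>N. complex_of_real (real (card {n \<in> {1..N}. f n mod m = j}) / real N))
               \<longlonglongrightarrow> complex_of_real (1 / real m)"
    by simp
  then show ?thesis
    by (rule tendsto_of_real_iff[THEN iffD1])
qed

theorem mainTheorem8:
  fixes m j :: nat
  assumes "m \<ge> 1" and "j < m"
  shows "(\<lambda>N. real (card {n \<in> {1..N}. hofH n mod m = j}) / real N)
           \<longlonglongrightarrow> 1 / real m"
proof (rule residue_density_from_exp_sums)
  show "0 < m" "j < m"
    using assms by simp_all
  show "(\<lambda>N. (\<Sum>n = 1..N. z ^ hofH n) / of_nat N) \<longlonglongrightarrow> 0" if "z ^ m = 1" "z \<noteq> 1" for z :: complex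
    using hofH_sum_tendsto_zero[OF that(1) _ that(2)] assms(1) by (simp add: hofH_sum_def)
qed

end
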